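(* Let $F$ be a positive integer and $S$ a numerical semigroup. The following are equivalent: (1) $S\in\mathrm{Sat}(F)$ and $\mathrm{Sat}(F)\text{-}\mathrm{rank}(S)=1$; (2) there is $m\in\mathbb{N}$ with $2\le m<F$, $m\nmid F$, and $S=\mathrm{T}(m,F+1)$.
   Context: A numerical semigroup is a subset $S\subseteq\mathbb{N}$ closed under addition, containing $0$, with $\mathbb{N}\setminus S$ finite; its Frobenius number $\mathrm{F}(S)$ is the largest integer not in $S$. For $A\subseteq\mathbb{N}$ and $a\in A$, let $\mathrm{d}_A(a)=\gcd\{x\in A\mid x\le a\}$. A numerical semigroup $S$ is saturated if $s+\mathrm{d}_S(s)\in S$ for all $s\in S\setminus\{0\}$. For a positive integer $F$, $\mathrm{Sat}(F)$ denotes the set of all saturated numerical semigroups $S$ with $\mathrm{F}(S)=F$. For $a,b\in\mathbb{N}$, $\mathrm{T}(a,b)=\{ka\mid k\in\mathbb{N}\}\cup\{x\in\mathbb{N}\mid x\ge b\}$. Let $\Delta(F+1)=\{0\}\cup\{x\in\mathbb{N}\mid x\ge F+1\}$. A set $X\subseteq\mathbb{N}$ is a $\mathrm{Sat}(F)$-set if $X\cap\Delta(F+1)=\emptyset$ and there exists $S\in\mathrm{Sat}(F)$ with $X\subseteq S$. For a $\mathrm{Sat}(F)$-set $X$, $\mathrm{Sat}(F)[X]$ denotes the intersection of all elements of $\mathrm{Sat}(F)$ containing $X$ (the smallest element of $\mathrm{Sat}(F)$ containing $X$). If $S=\mathrm{Sat}(F)[X]$, $X$ is a $\mathrm{Sat}(F)$-system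 of generators of $S$; it is minimal if $S\neq\mathrm{Sat}(F)[Y]$ for every proper subset $Y\subsetneq X$. Every $S\in\mathrm{Sat}(F)$ has a unique minimal $\mathrm{Sat}(F)$-system of generators, and its cardinality is the $\mathrm{Sat}(F)$-rank of $S$, denoted $\mathrm{Sat}(F)\text{-}\mathrm{rank}(S)$. *)

theory Defs
  imports Main
begin

definition numerical_semigroup :: "nat set \<Rightarrow> bool" where
  "numerical_semigroup S \<longleftrightarrow> 0 \<in> S \<and> (\<forall>x\<in>S. \<forall>y\<in>S. x + y \<in> S) \<and> finite (UNIV - S)"

definition frobenius :: "nat set \<Rightarrow> int" where
  "frobenius S = (if S = UNIV then -1 else int (Max (UNIV - S)))"

definition dA :: "nat set \<Rightarrow> nat \<Rightarrow> nat" where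
  "dA A a = Gcd {x \<in> A. x \<le> a}"

definition saturated :: "nat set \<Rightarrow> bool" where
  "saturated S \<longleftrightarrow> numerical_semigroup S \<and> (\<forall>s \<in> S - {0}. s + dA S s \<in> S)"

definition Sat :: "nat \<Rightarrow> nat set set" where
  "Sat F = {S. saturated S \<and> frobenius S = int F}"

definition T :: "nat \<Rightarrow> nat \<Rightarrow> nat set" where
  "T a b = {k * a | k. True} \<union> {x. x \<ge> b}"

definition Delta :: "nat \<Rightarrow> nat set" where
  "Delta n = {0} \<union> {x. x \<ge> n}"

definition Sat_set :: "nat \<Rightarrow> nat set \<Rightarrow> bool" where
  "Sat_set F X \<longleftrightarrow> X \<inter> Delta (F + 1) = {} \<and> (\<exists>S \<in> Sat F. X \<subseteq> S)"

definition Sat_closure :: "nat \<Rightarrow> nat set \<Rightarrow> nat set" where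
  "Sat_closure F X = \<Inter> {S \<in> Sat F. X \<subseteq> S}"

definition Sat_system :: "nat \<Rightarrow> nat set \<Rightarrow> nat set \<Rightarrow> bool" where
  "Sat_system F X S \<longleftrightarrow> Sat_set F X \<and> S = Sat_closure F X"

definition minimal_Sat_system :: "nat \<Rightarrow> nat set \<Rightarrow> nat set \<Rightarrow> bool" where
  "minimal_Sat_system F X S \<longleftrightarrow> Sat_system F X S \<and> (\<forall>Y. Y \<subset> X \<longrightarrow> S \<noteq> Sat_closure F Y)"

text \<open>Sat(F)-rank: cardinality of the (unique) minimal Sat(F)-system of generators.\<close>
definition Sat_rank :: "nat \<Rightarrow> nat set \<Rightarrow> nat" where
  "Sat_rank F S = card (THE X. minimal_Sat_system F X S)"

end

theory Submission imports Defs begin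

text \<open>
  Every \<open>S \<in> Sat F\<close> has a canonical generating set: the elements of \<open>S\<close> that are not
  in the \<open>Sat(F)\<close>-closure of the smaller elements of \<open>S\<close>. Whether \<open>z\<close> lies in the closure
  of a set depends only on the elements of the set that are at most \<open>z\<close>; hence this set is
  contained in every \<open>Sat(F)\<close>-system of generators of \<open>S\<close>, and so it is the unique minimal
  one. A semigroup of rank one is therefore the closure of a single \<open>m \<le> F\<close>, and the
  closure of \<open>{m}\<close> is \<open>T(m, F + 1)\<close>: the multiples of \<open>m\<close> up to \<open>F\<close> are forced by additivity,
  and \<open>T(m, F + 1)\<close> is already saturated, because for \<open>0 < s \<le> F\<close> in it \<open>d(s) = m\<close>. It has
  Frobenius number \<open>F\<close> exactly when \<open>m \<nmid> F\<close>.
\<close>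

lemma SatD:
  assumes "S \<in> Sat F"
  shows "0 \<in> S" "\<And>x y. x \<in> S \<Longrightarrow> y \<in> S \<Longrightarrow> x + y \<in> S" "F \<notin> S"
    "\<And>x. F < x \<Longrightarrow> x \<in> S" "\<And>s. s \<in> S \<Longrightarrow> s \<noteq> 0 \<Longrightarrow> s + dA S s \<in> S"
proof -
  have sat: "saturated S" and fr: "frobenius S = int F" using assms by (auto simp: Sat_def)
  hence ns: "numerical_semigroup S" by (simp add: saturated_def)
  show "0 \<in> S" "\<And>x y. x \<in> S \<Longrightarrow> y \<in> S \<Longrightarrow> x + y \<in> S"
    using ns by (auto simp: numerical_semigroup_def)
  show "\<And>s. s \<in> S \<Longrightarrow> s \<noteq> 0 \<Longrightarrow> s + dA S s \<in> S" using sat by (auto simp: saturated_def)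
  have "S \<noteq> UNIV" using fr by (auto simp: frobenius_def)
  hence Max: "Max (UNIV - S) = F" and ne: "UNIV - S \<noteq> {}" using fr by (auto simp: frobenius_def)
  have fin: "finite (UNIV - S)" using ns by (simp add: numerical_semigroup_def)
  show "F \<notin> S" using Max_in[OF fin ne] Max by auto
  show "\<And>x. F < x \<Longrightarrow> x \<in> S"
    using Max_ge[OF fin] Max by (metis DiffI UNIV_I not_le)
qed

lemma SatI:
  assumes "0 \<in> S" "\<And>x y. x \<in> S \<Longrightarrow> y \<in> S \<Longrightarrow> x + y \<in> S" "F \<notin> S" "\<And>x. F < x \<Longrightarrow> x \<in> S"
    "\<And>s. s \<in> S \<Longrightarrow> s \<noteq> 0 \<Longrightarrow> s + dA S s \<in> S"
  shows "S \<in> Sat F"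
proof -
  have gaps: "UNIV - S \<subseteq> {..F}" using assms(4) by (auto simp: not_less[symmetric])
  hence fin: "finite (UNIV - S)" using finite_subset by blast
  have "Max (UNIV - S) = F" using fin gaps assms(3) by (intro Max_eqI) auto
  moreover have "S \<noteq> UNIV" using assms(3) by auto
  ultimately show ?thesis using assms fin
    by (auto simp: Sat_def saturated_def numerical_semigroup_def frobenius_def)
qed

lemma dA_dvd_dA:
  assumes "{x \<in> A. x \<le> a} \<subseteq> {x \<in> B. x \<le> b}"
  shows "dA B b dvd dA A a"
  unfolding dA_def using assms by (intro Gcd_greatest) (auto intro: Gcd_dvd)

lemma Sat_mult_mem: "S \<in> Sat F \<Longrightarrow> m \<in> S \<Longrightarrow> k * m \<in> S"
  by (induction k) (auto intro: SatD(1,2))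

text \<open>Iterating the saturation step: \<open>d(s + d(s))\<close> divides \<open>d(s)\<close>, so the steps can be chained.\<close>

lemma Sat_add_dvd:
  assumes S: "S \<in> Sat F"
  shows "s \<in> S \<Longrightarrow> s \<noteq> 0 \<Longrightarrow> dA S s dvd n \<Longrightarrow> s + n \<in> S"
proof (induction n arbitrary: s rule: less_induct)
  case (less n)
  show ?case
  proof (cases "n = 0")
    case True
    thus ?thesis using less.prems by simp
  next
    case False
    let ?d = "dA S s"
    have "?d \<le> n" "?d \<noteq> 0" using less.prems(3) False by (auto simp: dvd_imp_le)
    have step: "s + ?d \<in> S" using SatD(5)[OF S] less.prems by auto
    have "dA S (s + ?d) dvd ?d" by (rule dA_dvd_dA) auto
    moreover have "?d dvd n - ?d" using less.prems(3) by (simp add: dvd_diff_nat)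
    ultimately have "dA S (s + ?d) dvd n - ?d" by (rule dvd_trans)
    hence "s + ?d + (n - ?d) \<in> S"
      using less.IH[of "n - ?d" "s + ?d"] step \<open>?d \<noteq> 0\<close> False by auto
    thus ?thesis using \<open>?d \<le> n\<close> by simp
  qed
qed

lemma Inter_in_Sat:
  assumes "\<S> \<subseteq> Sat F" "\<S> \<noteq> {}"
  shows "\<Inter>\<S> \<in> Sat F"
proof (rule SatI)
  show "0 \<in> \<Inter>\<S>" "F \<notin> \<Inter>\<S>" "\<And>x. F < x \<Longrightarrow> x \<in> \<Inter>\<S>"
    "\<And>x y. x \<in> \<Inter>\<S> \<Longrightarrow> y \<in> \<Inter>\<S> \<Longrightarrow> x + y \<in> \<Inter>\<S>"
    using assms SatD(1-4) by blast+
  fix s assume s: "s \<in> \<Inter>\<S>" "s \<noteq> 0"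
  show "s + dA (\<Inter>\<S>) s \<in> \<Inter>\<S>"
  proof
    fix S assume S: "S \<in> \<S>"
    have "dA S s dvd dA (\<Inter>\<S>) s" by (rule dA_dvd_dA) (use S in auto)
    thus "s + dA (\<Inter>\<S>) s \<in> S" using Sat_add_dvd[of S F s] S s assms(1) by blast
  qed
qed

lemma Delta_in_Sat: "0 < F \<Longrightarrow> Delta (F + 1) \<in> Sat F"
  by (rule SatI) (auto simp: Delta_def)

lemma Delta_subset_Sat: "S \<in> Sat F \<Longrightarrow> Delta (F + 1) \<subseteq> S"
  using SatD(1,4) by (auto simp: Delta_def)

lemma Sat_closure_in_Sat: "S \<in> Sat F \<Longrightarrow> X \<subseteq> S \<Longrightarrow> Sat_closure F X \<in> Sat F"
  unfolding Sat_closure_def by (rule Inter_in_Sat) auto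

lemma Sat_closure_upper: "X \<subseteq> Sat_closure F X"
  unfolding Sat_closure_def by auto

lemma Sat_closure_least: "S \<in> Sat F \<Longrightarrow> X \<subseteq> S \<Longrightarrow> Sat_closure F X \<subseteq> S"
  unfolding Sat_closure_def by auto

lemma Sat_closure_mono:
  "S \<in> Sat F \<Longrightarrow> Y \<subseteq> S \<Longrightarrow> X \<subseteq> Y \<Longrightarrow> Sat_closure F X \<subseteq> Sat_closure F Y"
  by (meson Sat_closure_in_Sat Sat_closure_least Sat_closure_upper order_trans)

lemma Sat_closure_empty: "0 < F \<Longrightarrow> Sat_closure F {} = Delta (F + 1)"
  by (meson Delta_in_Sat Delta_subset_Sat Sat_closure_in_Sat Sat_closure_least empty_subsetI
      subset_antisym)

lemma Sat_splice:
  assumes A: "A \<in> Sat F" and S: "S \<in> Sat F" and AS: "A \<subseteq> S"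
  shows "{z \<in> A. z \<le> x} \<union> {z \<in> S. x < z} \<in> Sat F" (is "?B \<in> _")
proof (rule SatI)
  have BS: "?B \<subseteq> S" using AS by auto
  show "0 \<in> ?B" "F \<notin> ?B" "\<And>z. F < z \<Longrightarrow> z \<in> ?B"
    using SatD(1,3,4)[OF A] SatD(3,4)[OF S] by auto
  show "a + b \<in> ?B" if "a \<in> ?B" "b \<in> ?B" for a b
  proof (cases "a + b \<le> x")
    case True
    thus ?thesis using that SatD(2)[OF A] by auto
  next
    case False
    thus ?thesis using that BS SatD(2)[OF S] by auto
  qed
  show "s + dA ?B s \<in> ?B" if s: "s \<in> ?B" "s \<noteq> 0" for s
  proof (cases "s + dA ?B s \<le> x")
    case True
    hence "s \<in> A" "s \<le> x" using s by auto
    moreover have "{t \<in> ?B. t \<le> s} = {t \<in> A. t \<le> s}" using \<open>s \<le> x\<close> by auto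
    ultimately have "s + dA ?B s \<in> A" using SatD(5)[OF A _ s(2)] by (simp add: dA_def)
    thus ?thesis using True by auto
  next
    case False
    have "dA S s dvd dA ?B s" by (rule dA_dvd_dA) (use BS in auto)
    hence "s + dA ?B s \<in> S" using Sat_add_dvd[OF S] s BS by blast
    thus ?thesis using False by auto
  qed
qed

lemma Sat_closure_truncate:
  assumes S: "S \<in> Sat F" and YS: "Y \<subseteq> S" and z: "z \<in> Sat_closure F Y" "z \<le> x"
  shows "z \<in> Sat_closure F {y \<in> Y. y \<le> x}"
proof -
  let ?A = "Sat_closure F {y \<in> Y. y \<le> x}"
  have "?A \<in> Sat F" "?A \<subseteq> S"
    using YS by (auto intro!: Sat_closure_in_Sat[OF S] Sat_closure_least[OF S])
  hence "{z \<in> ?A. z \<le> x} \<union> {z \<in> S. x < z} \<in> Sat F" using Sat_splice S by blast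
  moreover have "Y \<subseteq> {z \<in> ?A. z \<le> x} \<union> {z \<in> S. x < z}"
    using YS Sat_closure_upper[of "{y \<in> Y. y \<le> x}" F] by auto
  ultimately have "Sat_closure F Y \<subseteq> {z \<in> ?A. z \<le> x} \<union> {z \<in> S. x < z}"
    by (rule Sat_closure_least)
  thus ?thesis using z by auto
qed

definition Sat_gens :: "nat \<Rightarrow> nat set \<Rightarrow> nat set" where
  "Sat_gens F S = {x \<in> S. x \<notin> Sat_closure F {y \<in> S. y < x}}"

lemma Sat_gens_subset:
  assumes S: "S \<in> Sat F" and XS: "X \<subseteq> S" and SX: "S = Sat_closure F X"
  shows "Sat_gens F S \<subseteq> X"
proof
  fix x assume x: "x \<in> Sat_gens F S"
  show "x \<in> X"
  proof (rule ccontr)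
    assume "x \<notin> X"
    have "x \<in> Sat_closure F {z \<in> X. z \<le> x}"
      using Sat_closure_truncate[OF S XS] x SX by (auto simp: Sat_gens_def)
    moreover have "Sat_closure F {z \<in> X. z \<le> x} \<subseteq> Sat_closure F {y \<in> S. y < x}"
      by (rule Sat_closure_mono[OF S]) (use XS \<open>x \<notin> X\<close> in \<open>auto simp: le_less\<close>)
    ultimately show False using x by (auto simp: Sat_gens_def)
  qed
qed

lemma Sat_closure_Sat_gens:
  assumes S: "S \<in> Sat F"
  shows "Sat_closure F (Sat_gens F S) = S"
proof
  have gens: "Sat_gens F S \<subseteq> S" by (auto simp: Sat_gens_def)
  show "Sat_closure F (Sat_gens F S) \<subseteq> S" by (rule Sat_closure_least[OF S gens])
  have C: "Sat_closure F (Sat_gens F S) \<in> Sat F" by (rule Sat_closure_in_Sat[OF S gens])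
  have "z \<in> S \<Longrightarrow> z \<in> Sat_closure F (Sat_gens F S)" for z
  proof (induction z rule: less_induct)
    case (less z)
    show ?case
    proof (cases "z \<in> Sat_gens F S")
      case True
      thus ?thesis using Sat_closure_upper by blast
    next
      case False
      hence "z \<in> Sat_closure F {y \<in> S. y < z}" using less.prems by (auto simp: Sat_gens_def)
      moreover have "Sat_closure F {y \<in> S. y < z} \<subseteq> Sat_closure F (Sat_gens F S)"
        by (rule Sat_closure_least[OF C]) (use less.IH in auto)
      ultimately show ?thesis by blast
    qed
  qed
  thus "S \<subseteq> Sat_closure F (Sat_gens F S)" by blast
qed

lemma Sat_gens_disjoint_Delta:
  assumes S: "S \<in> Sat F"
  shows "Sat_gens F S \<inter> Delta (F + 1) = {}"
proof -
  have "Delta (F + 1) \<subseteq> Sat_closure F {y \<in> S. y < x}" for x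
    by (rule Delta_subset_Sat, rule Sat_closure_in_Sat[OF S]) auto
  thus ?thesis by (auto simp: Sat_gens_def)
qed

lemma minimal_Sat_system_Sat_gens:
  assumes S: "S \<in> Sat F"
  shows "minimal_Sat_system F (Sat_gens F S) S"
proof -
  have gens: "Sat_gens F S \<subseteq> S" by (auto simp: Sat_gens_def)
  have "Sat_gens F S \<inter> Delta (F + 1) = {}" by (rule Sat_gens_disjoint_Delta[OF S])
  moreover have "S \<noteq> Sat_closure F Y" if "Y \<subset> Sat_gens F S" for Y
    using Sat_gens_subset[OF S, of Y] that gens by blast
  ultimately show ?thesis
    unfolding minimal_Sat_system_def Sat_system_def Sat_set_def
    using S gens Sat_closure_Sat_gens[OF S] by blast
qed

text \<open>A minimal system contains the canonical generators, which already generate.\<close>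

lemma minimal_Sat_system_unique:
  assumes M: "minimal_Sat_system F X S"
  shows "X = Sat_gens F S"
proof -
  obtain S' where "S' \<in> Sat F" "X \<subseteq> S'" and SX: "S = Sat_closure F X"
    and min: "\<And>Y. Y \<subset> X \<Longrightarrow> S \<noteq> Sat_closure F Y"
    using M by (auto simp: minimal_Sat_system_def Sat_system_def Sat_set_def)
  hence S: "S \<in> Sat F" using Sat_closure_in_Sat by blast
  have "Sat_gens F S \<subseteq> X" using Sat_gens_subset[OF S _ SX] SX Sat_closure_upper by blast
  thus ?thesis using min[of "Sat_gens F S"] Sat_closure_Sat_gens[OF S] by blast
qed

lemma Sat_rank_eq_card: "S \<in> Sat F \<Longrightarrow> Sat_rank F S = card (Sat_gens F S)"
  unfolding Sat_rank_def
  by (metis minimal_Sat_system_Sat_gens minimal_Sat_system_unique the_equality)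

lemma Sat_gens_singleton:
  assumes "0 < F" and S: "S \<in> Sat F" and SX: "S = Sat_closure F {m}" and "m \<notin> Delta (F + 1)"
  shows "Sat_gens F S = {m}"
proof -
  have "Sat_gens F S \<subseteq> {m}" using Sat_gens_subset[OF S _ SX] SX Sat_closure_upper by blast
  moreover have "Sat_gens F S \<noteq> {}"
  proof
    assume "Sat_gens F S = {}"
    hence "S = Delta (F + 1)" using Sat_closure_Sat_gens[OF S] Sat_closure_empty[OF \<open>0 < F\<close>] by simp
    moreover have "m \<in> S" using SX Sat_closure_upper by blast
    ultimately show False using \<open>m \<notin> Delta (F + 1)\<close> by blast
  qed
  ultimately show ?thesis by blast
qed

lemma T_in_Sat:
  assumes "\<not> m dvd F"
  shows "T m (F + 1) \<in> Sat F"
proof (rule SatI)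
  show "0 \<in> T m (F + 1)" "F \<notin> T m (F + 1)" "\<And>x. F < x \<Longrightarrow> x \<in> T m (F + 1)"
    using assms by (auto simp: T_def)
  show "\<And>x y. x \<in> T m (F + 1) \<Longrightarrow> y \<in> T m (F + 1) \<Longrightarrow> x + y \<in> T m (F + 1)"
    unfolding T_def by (auto simp: add_mult_distrib[symmetric])
  fix s assume s: "s \<in> T m (F + 1)" "s \<noteq> 0"
  show "s + dA (T m (F + 1)) s \<in> T m (F + 1)"
  proof (cases "F + 1 \<le> s")
    case True
    thus ?thesis by (auto simp: T_def)
  next
    case False
    then obtain k where k: "s = k * m" using s by (auto simp: T_def)
    with s have "1 \<le> k" by (cases k) auto
    hence "m \<in> {x \<in> T m (F + 1). x \<le> s}" using k by (auto simp: T_def intro: exI[of _ 1])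
    hence "dA (T m (F + 1)) s dvd m" unfolding dA_def by (rule Gcd_dvd)
    moreover have "m dvd dA (T m (F + 1)) s" unfolding dA_def
      by (rule Gcd_greatest) (use False in \<open>auto simp: T_def\<close>)
    ultimately have "dA (T m (F + 1)) s = m" by (simp add: dvd_antisym)
    thus ?thesis using k by (auto simp: T_def intro: exI[of _ "Suc k"])
  qed
qed

lemma Sat_closure_singleton:
  assumes "\<not> m dvd F"
  shows "Sat_closure F {m} = T m (F + 1)"
proof
  have T: "T m (F + 1) \<in> Sat F" by (rule T_in_Sat[OF assms])
  have m: "{m} \<subseteq> T m (F + 1)" by (auto simp: T_def intro: exI[of _ 1])
  show "Sat_closure F {m} \<subseteq> T m (F + 1)" by (rule Sat_closure_least[OF T m])
  have C: "Sat_closure F {m} \<in> Sat F" by (rule Sat_closure_in_Sat[OF T m])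
  show "T m (F + 1) \<subseteq> Sat_closure F {m}"
    unfolding T_def using Sat_mult_mem[OF C] Sat_closure_upper[of "{m}" F] SatD(4)[OF C] by auto
qed

theorem corollary48:
  fixes F :: nat and S :: "nat set"
  assumes "F > 0" and "numerical_semigroup S"
  shows "(S \<in> Sat F \<and> Sat_rank F S = 1) \<longleftrightarrow>
         (\<exists>m::nat. 2 \<le> m \<and> m < F \<and> \<not> m dvd F \<and> S = T m (F + 1))"
proof
  assume "S \<in> Sat F \<and> Sat_rank F S = 1"
  hence S: "S \<in> Sat F" and "card (Sat_gens F S) = 1" by (auto simp: Sat_rank_eq_card)
  from \<open>card (Sat_gens F S) = 1\<close> obtain m where gens: "Sat_gens F S = {m}"
    by (rule card_1_singletonE)
  hence "m \<in> S" and SX: "S = Sat_closure F {m}"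
    using Sat_closure_Sat_gens[OF S] by (auto simp: Sat_gens_def)
  have "\<not> m dvd F" using Sat_mult_mem[OF S \<open>m \<in> S\<close>] SatD(3)[OF S]
    by (metis dvdE mult.commute)
  moreover have "0 < m" "m \<le> F" using Sat_gens_disjoint_Delta[OF S] gens by (auto simp: Delta_def)
  moreover have "m \<noteq> 1" "m \<noteq> F" using \<open>\<not> m dvd F\<close> by auto
  ultimately show "\<exists>m. 2 \<le> m \<and> m < F \<and> \<not> m dvd F \<and> S = T m (F + 1)"
    using SX Sat_closure_singleton by (intro exI[of _ m]) auto
next
  assume "\<exists>m. 2 \<le> m \<and> m < F \<and> \<not> m dvd F \<and> S = T m (F + 1)"
  then obtain m where m: "2 \<le> m" "m < F" "\<not> m dvd F" and ST: "S = T m (F + 1)" by blast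
  have S: "S \<in> Sat F" using T_in_Sat[OF m(3)] ST by simp
  have SX: "S = Sat_closure F {m}" using Sat_closure_singleton[OF m(3)] ST by simp
  have "Sat_gens F S = {m}"
    using Sat_gens_singleton[OF \<open>F > 0\<close> S SX] m by (simp add: Delta_def)
  thus "S \<in> Sat F \<and> Sat_rank F S = 1" using S by (simp add: Sat_rank_eq_card)
qed

end
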